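(* Let $q\in\mathbb{C}[x_0,x_1,x_2]_2$ be a nondegenerate quadratic form in three variables. Then $q^3$ has rank $11$, i.e. the minimal $r$ such that $q^3=\sum_{i=1}^r l_i^6$ with $l_i$ linear forms equals $11$.
   Context: The rank (Waring rank) of a form is the minimal number of powers of linear forms summing to it; equivalently (apolarity lemma) the minimal length of a smooth finite subscheme of $\mathbb{P}^2$ whose ideal annihilates the form under the differentiation action of $\mathbb{C}[y_0,y_1,y_2]$. *)

theory Defs
  imports "HOL-Analysis.Analysis"
begin

(* Forms on C^3 are represented as polynomial functions complex^3 => complex;
   over the infinite field C, equality of polynomials equals equality of the
   associated functions. *)

definition linear_form :: "complex^3 \<Rightarrow> complex^3 \<Rightarrow> complex" where
  "linear_form c x = (\<Sum>j\<in>UNIV. c $ j * x $ j)"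

definition quadratic_form :: "complex^3^3 \<Rightarrow> complex^3 \<Rightarrow> complex" where
  "quadratic_form A x = (\<Sum>i\<in>UNIV. \<Sum>j\<in>UNIV. A $ i $ j * x $ i * x $ j)"

definition waring_rank :: "nat \<Rightarrow> (complex^3 \<Rightarrow> complex) \<Rightarrow> nat" where
  "waring_rank d f = (LEAST r. \<exists>l :: nat \<Rightarrow> complex^3.
      \<forall>x. f x = (\<Sum>i<r. (linear_form (l i) x) ^ d))"

end

theory Submission
  imports Defs
begin

(*
  Every nondegenerate complex quadratic form is congruent to x.x = x1^2 + x2^2 + x3^2, and Waring
  decompositions are transported by linear changes of variables, so it suffices to show that (x.x)^3
  has rank 11. Eleven terms suffice by an explicit identity for (3x^2 + y^2 + z^2)^3.

  For the lower bound let (x.x)^3 = sum_j (b_j.x)^6. Substituting x = u + t v and comparing the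
  coefficients of t^3 shows that sum_j (u.b_j)^3 (v.b_j)^3 is a fixed polynomial in u.u, u.v, v.v.
  For ten test vectors u_k, whose cubes span the ternary cubics, this pairing has an invertible Gram
  matrix; so with ten terms the matrix ((u_k.b_j)^3) is invertible, and the cubics
  7 (b_i.x)^3 - 3 (b_i.b_i)(x.x)(b_i.x) take the values 14/5 delta_ij at the points b_j. Hence
  (b_i.b_i)^3 = 7/10 and (b_i.b_j)^6 is 0 or 27/700 for i ~= j, and evaluating the decomposition at
  b_0 gives 7/10 = 49/100 + 27 N / 700, i.e. 27 N = 147, for an integer N.
*)

notation linear_form (infixl "\<odot>" 70)

lemma linear_form_3: "u \<odot> x = u$1 * x$1 + u$2 * x$2 + u$3 * x$3"
  by (simp add: linear_form_def sum_3)

lemma linear_form_vector: "vector [p, q, r] \<odot> x = p * x$1 + q * x$2 + r * x$3"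
  by (simp add: linear_form_3)

lemma linear_form_commute: "u \<odot> v = v \<odot> u"
  by (simp add: linear_form_3 mult.commute)

lemma linear_form_add_left: "(u + v) \<odot> x = u \<odot> x + v \<odot> x"
  and linear_form_add_right: "x \<odot> (u + v) = x \<odot> u + x \<odot> v"
  and linear_form_diff_left: "(u - v) \<odot> x = u \<odot> x - v \<odot> x"
  and linear_form_scale_left: "(c *s u) \<odot> x = c * (u \<odot> x)"
  and linear_form_scale_right: "x \<odot> (c *s u) = c * (x \<odot> u)"
  and linear_form_zero_left: "0 \<odot> x = 0"
  by (simp_all add: linear_form_3 algebra_simps)

lemma linear_form_axis: "axis i 1 \<odot> x = x $ i"
  by (simp add: linear_form_def axis_def if_distrib[of "\<lambda>a. a * _"] cong: if_cong)

lemma linear_form_matrix_vector: "u \<odot> (M *v x) = (transpose M *v u) \<odot> x"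
  by (simp add: linear_form_3 matrix_vector_mult_def sum_3 transpose_def algebra_simps)

lemma complex_root_exists:
  assumes "n > 0"
  shows "\<exists>z::complex. z ^ n = w"
proof (cases "w = 0")
  case True
  then show ?thesis using assms by (intro exI[of _ 0]) simp
next
  case False
  then have "exp (Ln w / of_nat n) ^ n = w"
    using assms by (simp flip: exp_of_nat_mult)
  then show ?thesis by blast
qed

definition waring_decomposable :: "nat \<Rightarrow> (complex^3 \<Rightarrow> complex) \<Rightarrow> nat \<Rightarrow> bool" where
  "waring_decomposable d f r \<longleftrightarrow> (\<exists>l. \<forall>x. f x = (\<Sum>i<r. (l i \<odot> x) ^ d))"

lemma waring_rank_eq_Least: "waring_rank d f = (LEAST r. waring_decomposable d f r)"
  by (simp add: waring_rank_def waring_decomposable_def)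

lemma waring_decomposable_mono:
  assumes "waring_decomposable d f r" and "r \<le> s" and "d > 0"
  shows "waring_decomposable d f s"
proof -
  obtain l where l: "\<forall>x. f x = (\<Sum>i<r. (l i \<odot> x) ^ d)"
    using assms(1) unfolding waring_decomposable_def by blast
  define l' where "l' i = (if i < r then l i else 0)" for i
  have "(\<Sum>i<s. (l' i \<odot> x) ^ d) = (\<Sum>i<r. (l i \<odot> x) ^ d)" for x
  proof -
    have "(l' i \<odot> x) ^ d = (if i < r then (l i \<odot> x) ^ d else 0)" for i
      using \<open>d > 0\<close> by (simp add: l'_def linear_form_zero_left)
    then have "(\<Sum>i<s. (l' i \<odot> x) ^ d) = (\<Sum>i\<in>{..<s} \<inter> {i. i < r}. (l i \<odot> x) ^ d)"
      by (simp add: sum.inter_restrict)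
    also have "{..<s} \<inter> {i. i < r} = {..<r}"
      using \<open>r \<le> s\<close> by auto
    finally show ?thesis .
  qed
  then show ?thesis
    using l unfolding waring_decomposable_def by metis
qed

lemma waring_decomposable_compose_matrix:
  assumes "waring_decomposable d f r"
  shows "waring_decomposable d (\<lambda>x. f (M *v x)) r"
proof -
  obtain l where "\<forall>x. f x = (\<Sum>i<r. (l i \<odot> x) ^ d)"
    using assms unfolding waring_decomposable_def by blast
  then have "\<forall>x. f (M *v x) = (\<Sum>i<r. ((transpose M *v l i) \<odot> x) ^ d)"
    by (simp add: linear_form_matrix_vector)
  then show ?thesis
    unfolding waring_decomposable_def by (rule exI[of _ "\<lambda>i. transpose M *v l i"])
qed

lemma waring_decomposable_weighted:
  assumes "d > 0" and "\<forall>x. f x = (\<Sum>(w, l)\<leftarrow>wls. w * (l \<odot> x) ^ d)"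
  shows "waring_decomposable d f (length wls)"
proof -
  have "\<forall>i. \<exists>c. c ^ d = fst (wls ! i)"
    using complex_root_exists[OF \<open>d > 0\<close>] by blast
  then obtain c where c: "\<And>i. c i ^ d = fst (wls ! i)"
    by metis
  have "((c i *s snd (wls ! i)) \<odot> x) ^ d = fst (wls ! i) * (snd (wls ! i) \<odot> x) ^ d" for i x
    by (simp add: linear_form_scale_left power_mult_distrib c)
  then have "\<forall>x. f x = (\<Sum>i<length wls. ((c i *s snd (wls ! i)) \<odot> x) ^ d)"
    using assms(2) by (simp add: sum_list_sum_nth atLeast0LessThan case_prod_beta)
  then show ?thesis
    unfolding waring_decomposable_def by (rule exI[of _ "\<lambda>i. c i *s snd (wls ! i)"])
qed

definition bilinear_form :: "complex^3^3 \<Rightarrow> complex^3 \<Rightarrow> complex^3 \<Rightarrow> complex" where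
  "bilinear_form A u w = u \<odot> (A *v w)"

lemma bilinear_form_3:
  "bilinear_form A u w =
     u$1 * (A$1$1 * w$1 + A$1$2 * w$2 + A$1$3 * w$3)
   + u$2 * (A$2$1 * w$1 + A$2$2 * w$2 + A$2$3 * w$3)
   + u$3 * (A$3$1 * w$1 + A$3$2 * w$2 + A$3$3 * w$3)"
  by (simp add: bilinear_form_def linear_form_3 matrix_vector_mult_def sum_3)

lemma bilinear_form_add_left: "bilinear_form A (u + v) w = bilinear_form A u w + bilinear_form A v w"
  and bilinear_form_add_right: "bilinear_form A w (u + v) = bilinear_form A w u + bilinear_form A w v"
  and bilinear_form_diff_left: "bilinear_form A (u - v) w = bilinear_form A u w - bilinear_form A v w"
  and bilinear_form_diff_right: "bilinear_form A w (u - v) = bilinear_form A w u - bilinear_form A w v"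
  and bilinear_form_scale_left: "bilinear_form A (c *s u) w = c * bilinear_form A u w"
  and bilinear_form_scale_right: "bilinear_form A w (c *s u) = c * bilinear_form A w u"
  and bilinear_form_zero_right: "bilinear_form A w 0 = 0"
  by (simp_all add: bilinear_form_3 algebra_simps)

lemmas bilinear_form_simps =
  bilinear_form_add_left bilinear_form_add_right bilinear_form_diff_left bilinear_form_diff_right
  bilinear_form_scale_left bilinear_form_scale_right bilinear_form_zero_right

lemma bilinear_form_commute:
  assumes "transpose A = A"
  shows "bilinear_form A u w = bilinear_form A w u"
proof -
  have "A $ i $ j = A $ j $ i" for i j
    using arg_cong[OF assms, of "\<lambda>M. M $ i $ j"] by (simp add: transpose_def)
  then show ?thesis
    by (simp add: bilinear_form_3 algebra_simps)
qed

lemma quadratic_form_eq_bilinear_form: "quadratic_form A x = bilinear_form A x x"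
  by (simp add: quadratic_form_def bilinear_form_3 sum_3 algebra_simps)

lemma bilinear_form_axis: "bilinear_form A (axis i 1) (axis j 1) = A $ i $ j"
  by (simp add: bilinear_form_def linear_form_def matrix_vector_mult_def axis_def
      if_distrib[of "\<lambda>a. a * _"] if_distrib[of "\<lambda>a. _ * a"] cong: if_cong)

lemma det_eq_0_if_bilinear_form_rank_2:
  assumes "\<And>u w. bilinear_form A u w = (u \<odot> g) * (w \<odot> g) + (u \<odot> h) * (w \<odot> h)"
  shows "det A = 0"
proof -
  have entry: "A $ i $ j = g$i * g$j + h$i * h$j" for i j
    using assms[of "axis i 1" "axis j 1"] by (simp add: bilinear_form_axis linear_form_axis)
  show ?thesis
    unfolding det_3 entry by algebra
qed

(* g or h may be 0, so the same lemma also starts the Gram-Schmidt process. *)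
lemma exists_unit_vector_orthogonal:
  assumes sym: "transpose A = A" and nondeg: "det A \<noteq> 0"
    and g: "g = 0 \<or> bilinear_form A g g = 1" and h: "h = 0 \<or> bilinear_form A h h = 1"
    and gh: "bilinear_form A g h = 0"
  shows "\<exists>f. bilinear_form A f f = 1 \<and> bilinear_form A f g = 0 \<and> bilinear_form A f h = 0"
proof -
  note comm = bilinear_form_commute[OF sym]
  define P where "P x = x - bilinear_form A x g *s g - bilinear_form A x h *s h" for x
  have gg: "bilinear_form A x g * bilinear_form A g g = bilinear_form A x g" for x
    using g by (auto simp: bilinear_form_zero_right)
  have hh: "bilinear_form A x h * bilinear_form A h h = bilinear_form A x h" for x
    using h by (auto simp: bilinear_form_zero_right)
  have Pg: "bilinear_form A (P x) g = 0" and Ph: "bilinear_form A (P x) h = 0" for x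
    using gg[of x] hh[of x] gh comm[of h g]
    by (simp_all add: P_def bilinear_form_simps)
  have decomposition: "bilinear_form A u w = bilinear_form A (P u) (P w)
      + bilinear_form A u g * bilinear_form A w g + bilinear_form A u h * bilinear_form A w h" for u w
  proof -
    have "bilinear_form A (P u) (P w) = bilinear_form A (P u) w"
      using Pg[of u] Ph[of u] by (simp add: P_def bilinear_form_simps)
    also have "\<dots> = bilinear_form A u w
        - bilinear_form A u g * bilinear_form A w g - bilinear_form A u h * bilinear_form A w h"
      using comm[of g w] comm[of h w] by (simp add: P_def bilinear_form_simps)
    finally show ?thesis by simp
  qed
  \<comment> \<open>Otherwise the form would be a sum of two squares of linear forms, hence degenerate.\<close>
  have "\<exists>x. bilinear_form A (P x) (P x) \<noteq> 0"
  proof (rule ccontr)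
    assume "\<nexists>x. bilinear_form A (P x) (P x) \<noteq> 0"
    then have iso: "bilinear_form A (P x) (P x) = 0" for x
      by blast
    have "P (u + w) = P u + P w" for u w
      by (simp add: P_def bilinear_form_simps vec_eq_iff algebra_simps)
    then have "bilinear_form A (P u) (P w) = 0" for u w
      using iso[of "u + w"] iso[of u] iso[of w] comm[of "P u" "P w"]
      by (simp add: bilinear_form_simps)
    then have "bilinear_form A u w
        = (u \<odot> (A *v g)) * (w \<odot> (A *v g)) + (u \<odot> (A *v h)) * (w \<odot> (A *v h))" for u w
      using decomposition[of u w] by (simp add: bilinear_form_def)
    then show False
      using det_eq_0_if_bilinear_form_rank_2 nondeg by blast
  qed
  then obtain x where x: "bilinear_form A (P x) (P x) \<noteq> 0"
    by blast
  define c where "c = 1 / csqrt (bilinear_form A (P x) (P x))"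
  have "bilinear_form A (c *s P x) (c *s P x) = c^2 * bilinear_form A (P x) (P x)"
    by (simp add: bilinear_form_simps power2_eq_square)
  also have "\<dots> = 1"
    using x by (simp add: c_def power_divide)
  finally show ?thesis
    using Pg[of x] Ph[of x] by (intro exI[of _ "c *s P x"]) (simp add: bilinear_form_simps)
qed

lemma exists_orthonormal_basis:
  assumes "transpose A = A" and "det A \<noteq> 0"
  obtains f :: "3 \<Rightarrow> complex^3" where "\<And>i j. bilinear_form A (f i) (f j) = (if i = j then 1 else 0)"
proof -
  obtain f1 where f1: "bilinear_form A f1 f1 = 1"
    using exists_unit_vector_orthogonal[OF assms, of 0 0] by (auto simp: bilinear_form_zero_right)
  obtain f2 where f2: "bilinear_form A f2 f2 = 1" "bilinear_form A f2 f1 = 0"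
    using exists_unit_vector_orthogonal[OF assms, of f1 0] f1 by (auto simp: bilinear_form_zero_right)
  obtain f3 where f3: "bilinear_form A f3 f3 = 1" "bilinear_form A f3 f1 = 0" "bilinear_form A f3 f2 = 0"
    using exists_unit_vector_orthogonal[OF assms, of f1 f2] f1 f2 bilinear_form_commute[OF assms(1), of f1 f2]
    by auto
  define f :: "3 \<Rightarrow> complex^3" where "f i = (if i = 1 then f1 else if i = 2 then f2 else f3)" for i
  have "bilinear_form A (f i) (f j) = (if i = j then 1 else 0)" for i j
    using f1 f2 f3 bilinear_form_commute[OF assms(1)] exhaust_3[of i] exhaust_3[of j]
    by (auto simp: f_def)
  then show ?thesis by (rule that)
qed

lemma quadratic_form_congruent_sum_squares:
  assumes "transpose A = A" and "det A \<noteq> 0"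
  obtains M where "invertible M" and "\<And>x. quadratic_form A x = (M *v x) \<odot> (M *v x)"
proof -
  obtain f :: "3 \<Rightarrow> complex^3" where f: "\<And>i j. bilinear_form A (f i) (f j) = (if i = j then 1 else 0)"
    using exists_orthonormal_basis[OF assms] by blast
  define F :: "complex^3^3" where "F = (\<chi> i k. f k $ i)"
  define M where "M = transpose F ** A"
  have "(M ** F) $ i $ j = bilinear_form A (f i) (f j)" for i j
    by (simp add: M_def F_def bilinear_form_def linear_form_def matrix_matrix_mult_def
        matrix_vector_mult_def transpose_def sum_distrib_left sum_distrib_right mult.assoc)
      (rule sum.swap)
  then have MF: "M ** F = mat 1"
    by (simp add: f vec_eq_iff mat_def)
  then have "F ** M = mat 1"
    by (rule matrix_left_right_inverse1)
  then have "x = F *v (M *v x)" for x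
    by (simp add: matrix_vector_mul_assoc)
  moreover have "bilinear_form A (F *v y) (F *v y) = y \<odot> y" for y
  proof -
    have "bilinear_form A (F *v y) (F *v y) = y \<odot> ((M ** F) *v y)"
      by (simp add: M_def bilinear_form_def linear_form_matrix_vector matrix_vector_mul_assoc
          matrix_transpose_mul matrix_mul_assoc assms(1))
    then show ?thesis by (simp add: MF)
  qed
  ultimately have "quadratic_form A x = (M *v x) \<odot> (M *v x)" for x
    by (metis quadratic_form_eq_bilinear_form)
  moreover have "invertible M"
    using MF \<open>F ** M = mat 1\<close> invertible_def by blast
  ultimately show ?thesis
    using that by blast
qed

lemma waring_decomposable_cube_quadratic_form_iff:
  assumes "transpose A = A" and "det A \<noteq> 0"
  shows "waring_decomposable 6 (\<lambda>x. (quadratic_form A x) ^ 3) r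
     \<longleftrightarrow> waring_decomposable 6 (\<lambda>x. (x \<odot> x) ^ 3) r"
proof -
  obtain M where "invertible M" and M: "\<And>x. quadratic_form A x = (M *v x) \<odot> (M *v x)"
    using quadratic_form_congruent_sum_squares[OF assms] by blast
  then obtain N where "M ** N = mat 1"
    unfolding invertible_def by blast
  then have "quadratic_form A (N *v y) = y \<odot> y" for y
    by (simp add: M matrix_vector_mul_assoc)
  then have N: "(\<lambda>y. (quadratic_form A (N *v y)) ^ 3) = (\<lambda>y. (y \<odot> y) ^ 3)"
    by simp
  show ?thesis
  proof
    assume "waring_decomposable 6 (\<lambda>x. (quadratic_form A x) ^ 3) r"
    from waring_decomposable_compose_matrix[OF this, of N]
    show "waring_decomposable 6 (\<lambda>x. (x \<odot> x) ^ 3) r"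
      by (simp only: N)
  next
    assume "waring_decomposable 6 (\<lambda>x. (x \<odot> x) ^ 3) r"
    from waring_decomposable_compose_matrix[OF this, of M]
    show "waring_decomposable 6 (\<lambda>x. (quadratic_form A x) ^ 3) r"
      by (simp only: M)
  qed
qed

lemma waring_rank_cube_quadratic_form:
  assumes "transpose A = A" and "det A \<noteq> 0"
  shows "waring_rank 6 (\<lambda>x. (quadratic_form A x) ^ 3) = waring_rank 6 (\<lambda>x. (x \<odot> x) ^ 3)"
  by (simp add: waring_rank_eq_Least waring_decomposable_cube_quadratic_form_iff[OF assms])

lemma waring_decomposable_cube_sum_squares_11: "waring_decomposable 6 (\<lambda>x. (x \<odot> x) ^ 3) 11"
proof -
  \<comment> \<open>All nondegenerate forms being congruent, we may decompose the cube of 3x^2 + y^2 + z^2,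
    which has an 11-term decomposition with rational coefficients.\<close>
  define A :: "complex^3^3" where "A = (\<chi> i j. if i = j then if i = 1 then 3 else 1 else 0)"
  have "transpose A = A"
    by (simp add: A_def transpose_def vec_eq_iff)
  moreover have "det A \<noteq> 0"
    by (simp add: A_def det_3)
  moreover have "waring_decomposable 6 (\<lambda>x. (quadratic_form A x) ^ 3) 11"
  proof -
    have identity: "(3*x^2 + y^2 + z^2)^3 = 14*x^6 + 7/10*y^6 + 7/10*z^6
      + 1/20*(x+y+z)^6 + 1/20*(x+y-z)^6 + 1/20*(x-y+z)^6 + 1/20*(x-y-z)^6
      + 1/20*(2*x+y)^6 + 1/20*(2*x-y)^6 + 1/20*(2*x+z)^6 + 1/20*(2*x-z)^6" for x y z :: complex
      by algebra
    have "quadratic_form A x = 3 * (x$1)^2 + (x$2)^2 + (x$3)^2" for x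
      by (simp add: quadratic_form_def A_def sum_3 power2_eq_square)
    then have "\<forall>x. (quadratic_form A x) ^ 3 = (\<Sum>(w, l)\<leftarrow>
        [(14, vector [1, 0, 0]), (7/10, vector [0, 1, 0]), (7/10, vector [0, 0, 1]),
         (1/20, vector [1, 1, 1]), (1/20, vector [1, 1, -1]), (1/20, vector [1, -1, 1]),
         (1/20, vector [1, -1, -1]), (1/20, vector [2, 1, 0]), (1/20, vector [2, -1, 0]),
         (1/20, vector [2, 0, 1]), (1/20, vector [2, 0, -1])]. w * (l \<odot> x) ^ 6)"
      by (simp add: linear_form_vector identity)
    from waring_decomposable_weighted[OF _ this] show ?thesis
      by (simp add: numeral_eq_Suc)
  qed
  ultimately show ?thesis
    using waring_decomposable_cube_quadratic_form_iff by blast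
qed

lemma cube_products_from_sixth_powers:
  fixes \<alpha> \<beta> :: "nat \<Rightarrow> complex" and A B C :: complex
  assumes "\<And>t. (A + 2*t*B + t^2*C)^3 = (\<Sum>j<n. (\<alpha> j + t*\<beta> j)^6)"
  shows "(\<Sum>j<n. (\<alpha> j)^3 * (\<beta> j)^3) = (3*A*B*C + 2*B^3) / 5"
proof -
  \<comment> \<open>The weights 1, -8, 13, -13, 8, -1 at t = -3, -2, -1, 1, 2, 3 annihilate
    1, t, t^2, t^4, t^5, t^6 and send t^3 to 48.\<close>
  have weights: "960 * ((\<alpha> j)^3 * (\<beta> j)^3) = (\<alpha> j + (-3)*\<beta> j)^6 - 8*(\<alpha> j + (-2)*\<beta> j)^6
     + 13*(\<alpha> j + (-1)*\<beta> j)^6 - 13*(\<alpha> j + 1*\<beta> j)^6 + 8*(\<alpha> j + 2*\<beta> j)^6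
     - (\<alpha> j + 3*\<beta> j)^6" for j
    by algebra
  have "960 * (\<Sum>j<n. (\<alpha> j)^3 * (\<beta> j)^3)
      = (\<Sum>j<n. (\<alpha> j + (-3)*\<beta> j)^6) - 8*(\<Sum>j<n. (\<alpha> j + (-2)*\<beta> j)^6)
      + 13*(\<Sum>j<n. (\<alpha> j + (-1)*\<beta> j)^6) - 13*(\<Sum>j<n. (\<alpha> j + 1*\<beta> j)^6)
      + 8*(\<Sum>j<n. (\<alpha> j + 2*\<beta> j)^6) - (\<Sum>j<n. (\<alpha> j + 3*\<beta> j)^6)"
    unfolding sum_distrib_left weights by (simp only: sum.distrib sum_subtractf sum_distrib_left)
  also have "\<dots> = (A + 2*(-3)*B + (-3)^2*C)^3 - 8*(A + 2*(-2)*B + (-2)^2*C)^3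
      + 13*(A + 2*(-1)*B + (-1)^2*C)^3 - 13*(A + 2*1*B + 1^2*C)^3
      + 8*(A + 2*2*B + 2^2*C)^3 - (A + 2*3*B + 3^2*C)^3"
    by (simp only: assms)
  also have "\<dots> = 960 * ((3*A*B*C + 2*B^3) / 5)"
    by (simp add: power2_eq_square power3_eq_cube algebra_simps)
  finally have "960 * (\<Sum>j<n. (\<alpha> j)^3 * (\<beta> j)^3) = 960 * ((3*A*B*C + 2*B^3) / 5)" .
  then show ?thesis
    unfolding mult_cancel_left by simp
qed

definition cube_pairing :: "complex^3 \<Rightarrow> complex^3 \<Rightarrow> complex" where
  "cube_pairing u v = (u \<odot> v) * (3 * (u \<odot> u) * (v \<odot> v) + 2 * (u \<odot> v)^2) / 5"

definition test_vectors :: "(complex^3) list" where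
  "test_vectors =
    [vector [1, 0, 0], vector [0, 1, 0], vector [0, 0, 1], vector [1, 1, 0], vector [1, -1, 0],
     vector [1, 0, 1], vector [1, 0, -1], vector [0, 1, 1], vector [0, 1, -1], vector [1, 1, 1]]"

definition test_gram :: "complex list list" where
  "test_gram =
    [[1, 0, 0, 8/5, 8/5, 8/5, 8/5, 0, 0, 11/5],
     [0, 1, 0, 8/5, -8/5, 0, 0, 8/5, 8/5, 11/5],
     [0, 0, 1, 0, 0, 8/5, -8/5, 8/5, -8/5, 11/5],
     [8/5, 8/5, 0, 8, 0, 14/5, 14/5, 14/5, 14/5, 52/5],
     [8/5, -8/5, 0, 0, 8, 14/5, 14/5, -14/5, -14/5, 0],
     [8/5, 0, 8/5, 14/5, 14/5, 8, 0, 14/5, -14/5, 52/5],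
     [8/5, 0, -8/5, 14/5, 14/5, 0, 8, -14/5, 14/5, 0],
     [0, 8/5, 8/5, 14/5, -14/5, 14/5, -14/5, 8, 0, 52/5],
     [0, 8/5, -8/5, 14/5, -14/5, -14/5, 14/5, 0, 8, 0],
     [11/5, 11/5, 11/5, 52/5, 0, 52/5, 0, 52/5, 0, 27]]"

definition test_gram_inv :: "complex list list" where
  "test_gram_inv =
    [[125/28, 5/12, 5/12, -25/28, -10/21, -25/28, -10/21, -5/12, 0, 5/12],
     [5/12, 125/28, 5/12, -25/28, 10/21, -5/12, 0, -25/28, -10/21, 5/12],
     [5/12, 5/12, 125/28, -5/12, 0, -25/28, 10/21, -25/28, 10/21, 5/12],
     [-25/28, -25/28, -5/12, 65/84, 0, 65/168, -5/168, 65/168, -5/168, -5/12],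
     [-10/21, 10/21, 0, 0, 5/14, -5/168, -5/168, 5/168, 5/168, 0],
     [-25/28, -5/12, -25/28, 65/168, -5/168, 65/84, 0, 65/168, 5/168, -5/12],
     [-10/21, 0, 10/21, -5/168, -5/168, 0, 5/14, 5/168, -5/168, 0],
     [-5/12, -25/28, -25/28, 65/168, 5/168, 65/168, 5/168, 65/84, 0, -5/12],
     [0, -10/21, 10/21, -5/168, 5/168, 5/168, -5/168, 0, 5/14, 0],
     [5/12, 5/12, 5/12, -5/12, 0, -5/12, 0, -5/12, 0, 5/12]]"

lemma all_less_10:
  "(\<forall>k<10::nat. P k) \<longleftrightarrow> P 0 \<and> P 1 \<and> P 2 \<and> P 3 \<and> P 4 \<and> P 5 \<and> P 6 \<and> P 7 \<and> P 8 \<and> P 9"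
proof -
  have "{..<10::nat} = {0, 1, 2, 3, 4, 5, 6, 7, 8, 9}"
    by (simp add: lessThan_Suc eval_nat_numeral insert_commute)
  then have "(\<forall>k<10::nat. P k) \<longleftrightarrow> (\<forall>k\<in>{0, 1, 2, 3, 4, 5, 6, 7, 8, 9}. P k)"
    by (metis lessThan_iff)
  then show ?thesis
    by simp
qed

lemma sum_less_10:
  "(\<Sum>i<10::nat. f i) = f 0 + f 1 + f 2 + f 3 + f 4 + f 5 + f 6 + f 7 + f 8 + (f 9::'a::comm_monoid_add)"
  by (simp add: eval_nat_numeral ac_simps)

lemma cube_pairing_test_vectors:
  "\<forall>k<10. \<forall>m<10. cube_pairing (test_vectors ! k) (test_vectors ! m) = test_gram ! k ! m"
  unfolding all_less_10 by (simp add: test_vectors_def test_gram_def cube_pairing_def linear_form_vector)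

lemma test_gram_mult_inv:
  "\<forall>k<10. \<forall>p<10. (\<Sum>m<10. test_gram ! k ! m * test_gram_inv ! m ! p) = (if k = p then 1 else 0)"
  unfolding all_less_10 sum_less_10 by (simp add: test_gram_def test_gram_inv_def)

(* The type 'n only serves to view the nat-indexed arrays as square matrices, for which a right
   inverse is also a left inverse. *)
lemma right_inverse_imp_trivial_kernel:
  fixes Y Z :: "nat \<Rightarrow> nat \<Rightarrow> 'a::field" and w :: "nat \<Rightarrow> 'a"
  assumes card: "CARD('n::finite) = n"
    and inverse: "\<And>i k. i < n \<Longrightarrow> k < n \<Longrightarrow> (\<Sum>j<n. Y i j * Z j k) = (if i = k then 1 else 0)"
    and kernel: "\<And>i. i < n \<Longrightarrow> (\<Sum>j<n. Y i j * w j) = 0"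
    and "k < n"
  shows "w k = 0"
proof -
  obtain g :: "'n \<Rightarrow> nat" where g: "bij_betw g UNIV {..<n}"
    using ex_bij_betw_finite_nat[of "UNIV :: 'n set"] card by (auto simp: atLeast0LessThan)
  have reindex: "(\<Sum>j\<in>UNIV. F (g j)) = (\<Sum>j<n. F j)" for F :: "nat \<Rightarrow> 'a"
    using sum.reindex_bij_betw[OF g] .
  have g_less: "g i < n" for i
    using bij_betw_apply[OF g] by simp
  have g_eq_iff: "g i = g k \<longleftrightarrow> i = k" for i k
    using g by (auto simp: bij_betw_def inj_eq)
  define Ym Zm :: "'a^'n^'n" where "Ym = (\<chi> i j. Y (g i) (g j))" and "Zm = (\<chi> i j. Z (g i) (g j))"
  define wv :: "'a^'n" where "wv = (\<chi> j. w (g j))"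
  have "Ym ** Zm = mat 1"
    by (simp add: Ym_def Zm_def matrix_matrix_mult_def vec_eq_iff mat_def
        reindex[of "\<lambda>j. Y (g _) j * Z j (g _)"] inverse g_less g_eq_iff)
  then have ZY: "Zm ** Ym = mat 1"
    by (rule matrix_left_right_inverse1)
  have "Ym *v wv = 0"
    by (simp add: Ym_def wv_def matrix_vector_mult_def vec_eq_iff reindex[of "\<lambda>j. Y (g _) j * w j"]
        kernel g_less)
  then have "wv = 0"
    by (metis ZY matrix_vector_mul_assoc matrix_vector_mul_lid matrix_vector_mult_0_right)
  moreover obtain i where "g i = k"
    using g \<open>k < n\<close> by (metis bij_betw_imp_surj_on imageE lessThan_iff)
  ultimately show ?thesis
    by (metis wv_def vec_lambda_beta zero_index)
qed

definition dual_cubic :: "complex^3 \<Rightarrow> complex^3 \<Rightarrow> complex" where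
  "dual_cubic a x = 7 * (a \<odot> x)^3 - 3 * (a \<odot> a) * (x \<odot> x) * (a \<odot> x)"

locale sixth_power_decomposition =
  fixes b :: "nat \<Rightarrow> complex^3" and n :: nat
  assumes decomposition: "\<And>x. (x \<odot> x)^3 = (\<Sum>j<n. (b j \<odot> x)^6)"
begin

lemma sum_cube_products: "(\<Sum>j<n. (u \<odot> b j)^3 * (v \<odot> b j)^3) = cube_pairing u v"
proof -
  have "(u \<odot> u + 2*t*(u \<odot> v) + t^2*(v \<odot> v))^3 = (\<Sum>j<n. (u \<odot> b j + t * (v \<odot> b j))^6)" for t
  proof -
    have "(u + t *s v) \<odot> (u + t *s v) = u \<odot> u + 2*t*(u \<odot> v) + t^2*(v \<odot> v)"
      by (simp add: linear_form_add_left linear_form_add_right linear_form_scale_left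
          linear_form_scale_right linear_form_commute[of v u] algebra_simps power2_eq_square)
    moreover have "b j \<odot> (u + t *s v) = u \<odot> b j + t * (v \<odot> b j)" for j
      by (simp add: linear_form_add_right linear_form_scale_right linear_form_commute)
    ultimately show ?thesis
      using decomposition[of "u + t *s v"] by simp
  qed
  from cube_products_from_sixth_powers[OF this] show ?thesis
    by (simp add: cube_pairing_def power2_eq_square power3_eq_cube algebra_simps)
qed

lemma sum_self_linear_cube_products:
  "(\<Sum>j<n. (b j \<odot> b j) * (a \<odot> b j) * (v \<odot> b j)^3) = 7/5 * (a \<odot> v) * (v \<odot> v)"
proof -
  define e1 e2 e3 :: "complex^3" where
    "e1 = vector [1, 0, 0]" and "e2 = vector [0, 1, 0]" and "e3 = vector [0, 0, 1]"
  have cubes: "(x \<odot> x) * (a \<odot> x) =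
      (((e1 + a) \<odot> x)^3 - ((e1 - a) \<odot> x)^3 + ((e2 + a) \<odot> x)^3 - ((e2 - a) \<odot> x)^3
     + ((e3 + a) \<odot> x)^3 - ((e3 - a) \<odot> x)^3) / 6 - (a \<odot> x)^3" for x
  proof -
    have "(p^2 + q^2 + r^2) * s = ((p + s)^3 - (p - s)^3 + (q + s)^3 - (q - s)^3
        + (r + s)^3 - (r - s)^3) / 6 - s^3" for p q r s :: complex
      by algebra
    moreover have "x \<odot> x = (x$1)^2 + (x$2)^2 + (x$3)^2"
      by (simp add: linear_form_3 power2_eq_square)
    ultimately show ?thesis
      by (simp add: e1_def e2_def e3_def linear_form_add_left linear_form_diff_left
          linear_form_vector)
  qed
  have pointwise: "(b j \<odot> b j) * (a \<odot> b j) * (v \<odot> b j)^3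
      = (((e1 + a) \<odot> b j)^3 * (v \<odot> b j)^3 - ((e1 - a) \<odot> b j)^3 * (v \<odot> b j)^3
       + ((e2 + a) \<odot> b j)^3 * (v \<odot> b j)^3 - ((e2 - a) \<odot> b j)^3 * (v \<odot> b j)^3
       + ((e3 + a) \<odot> b j)^3 * (v \<odot> b j)^3 - ((e3 - a) \<odot> b j)^3 * (v \<odot> b j)^3) / 6
       - (a \<odot> b j)^3 * (v \<odot> b j)^3" for j
    unfolding cubes by (simp add: field_simps)
  have "(\<Sum>j<n. (b j \<odot> b j) * (a \<odot> b j) * (v \<odot> b j)^3)
      = ((\<Sum>j<n. ((e1 + a) \<odot> b j)^3 * (v \<odot> b j)^3) - (\<Sum>j<n. ((e1 - a) \<odot> b j)^3 * (v \<odot> b j)^3)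
       + (\<Sum>j<n. ((e2 + a) \<odot> b j)^3 * (v \<odot> b j)^3) - (\<Sum>j<n. ((e2 - a) \<odot> b j)^3 * (v \<odot> b j)^3)
       + (\<Sum>j<n. ((e3 + a) \<odot> b j)^3 * (v \<odot> b j)^3) - (\<Sum>j<n. ((e3 - a) \<odot> b j)^3 * (v \<odot> b j)^3)) / 6
       - (\<Sum>j<n. (a \<odot> b j)^3 * (v \<odot> b j)^3)"
    by (simp only: pointwise sum.distrib sum_subtractf sum_divide_distrib[symmetric])
  also have "\<dots> = (cube_pairing (e1 + a) v - cube_pairing (e1 - a) v + cube_pairing (e2 + a) v
       - cube_pairing (e2 - a) v + cube_pairing (e3 + a) v - cube_pairing (e3 - a) v) / 6
       - cube_pairing a v"
    by (simp only: sum_cube_products)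
  also have "\<dots> = 7/5 * (a \<odot> v) * (v \<odot> v)"
    by (simp add: cube_pairing_def e1_def e2_def e3_def linear_form_add_left linear_form_diff_left
        linear_form_3) algebra
  finally show ?thesis .
qed

lemma sum_dual_cubic: "(\<Sum>j<n. dual_cubic a (b j) * (v \<odot> b j)^3) = 14/5 * (a \<odot> v)^3"
proof -
  have "(\<Sum>j<n. dual_cubic a (b j) * (v \<odot> b j)^3)
      = 7 * (\<Sum>j<n. (a \<odot> b j)^3 * (v \<odot> b j)^3)
        - 3 * (a \<odot> a) * (\<Sum>j<n. (b j \<odot> b j) * (a \<odot> b j) * (v \<odot> b j)^3)"
    by (simp add: dual_cubic_def sum_subtractf sum_distrib_left algebra_simps)
  also have "\<dots> = 14/5 * (a \<odot> v)^3"
    unfolding sum_cube_products sum_self_linear_cube_products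
    by (simp add: cube_pairing_def algebra_simps power2_eq_square power3_eq_cube)
  finally show ?thesis .
qed


lemma dual_cubic_biorthogonal:
  assumes "n = 10" and "i < 10" and "j < 10"
  shows "dual_cubic (b i) (b j) = (if i = j then 14/5 else 0)"
proof -
  define Y where "Y k j = (test_vectors ! k \<odot> b j)^3" for k j
  define Z where "Z j p = (\<Sum>m<10. Y m j * test_gram_inv ! m ! p)" for j p
  define w where "w j = dual_cubic (b i) (b j) - (if j = i then 14/5 else 0)" for j
  \<comment> \<open>Y Y^T = test_gram by sum_cube_products, so Z = Y^T test_gram_inv is a right inverse of Y.\<close>
  have right_inverse: "(\<Sum>j<10. Y k j * Z j p) = (if k = p then 1 else 0)" if "k < 10" "p < 10" for k p
  proof -
    have "(\<Sum>j<10. Y k j * Z j p) = (\<Sum>m<10. (\<Sum>j<10. Y k j * Y m j) * test_gram_inv ! m ! p)"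
      unfolding Z_def sum_distrib_left sum_distrib_right mult.assoc by (rule sum.swap)
    also have "\<dots> = (\<Sum>m<10. test_gram ! k ! m * test_gram_inv ! m ! p)"
      using sum_cube_products cube_pairing_test_vectors \<open>k < 10\<close> \<open>n = 10\<close> by (simp add: Y_def)
    also have "\<dots> = (if k = p then 1 else 0)"
      using test_gram_mult_inv that by simp
    finally show ?thesis .
  qed
  have kernel: "(\<Sum>j<10. Y k j * w j) = 0" for k
  proof -
    have "Y k j * w j = dual_cubic (b i) (b j) * (test_vectors ! k \<odot> b j)^3
        - (if j = i then 14/5 * Y k i else 0)" for j
      by (simp add: w_def Y_def algebra_simps)
    then have "(\<Sum>j<10. Y k j * w j)
        = (\<Sum>j<10. dual_cubic (b i) (b j) * (test_vectors ! k \<odot> b j)^3) - 14/5 * Y k i"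
      using \<open>i < 10\<close> by (simp add: sum_subtractf)
    also have "\<dots> = 0"
      using sum_dual_cubic[of "b i" "test_vectors ! k"] linear_form_commute[of "b i"] \<open>n = 10\<close>
      by (simp add: Y_def)
    finally show ?thesis .
  qed
  have "w j = 0"
    by (rule right_inverse_imp_trivial_kernel[where 'n = 10, OF _ right_inverse kernel \<open>j < 10\<close>]) simp
  then show ?thesis
    by (simp add: w_def)
qed


lemma self_product_cube:
  assumes "n = 10" and "i < 10"
  shows "(b i \<odot> b i)^3 = 7/10"
proof -
  have "dual_cubic (b i) (b i) = 4 * (b i \<odot> b i)^3"
    by (simp add: dual_cubic_def power3_eq_cube)
  then show ?thesis
    using dual_cubic_biorthogonal[OF assms(1,2,2)] by (simp add: mult.commute)
qed

lemma cross_product_sixth_power: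
  assumes "n = 10" and "i < 10" and "j < 10" and "i \<noteq> j"
  shows "(b i \<odot> b j)^6 = 0 \<or> (b i \<odot> b j)^6 = 27/700"
proof (cases "b i \<odot> b j = 0")
  case False
  define g where "g = b i \<odot> b j"
  have "g * (7 * g^2 - 3 * (b i \<odot> b i) * (b j \<odot> b j)) = 0"
    using dual_cubic_biorthogonal[OF assms(1-3)] \<open>i \<noteq> j\<close>
    by (simp add: dual_cubic_def g_def power2_eq_square power3_eq_cube algebra_simps)
  then have "7 * g^2 = 3 * (b i \<odot> b i) * (b j \<odot> b j)"
    using False by (simp add: g_def)
  then have "(7 * g^2)^3 = (3 * (b i \<odot> b i) * (b j \<odot> b j))^3"
    by simp
  then have "343 * g^6 = 27 * (b i \<odot> b i)^3 * (b j \<odot> b j)^3"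
    by (simp add: power_mult_distrib flip: power_mult)
  also have "\<dots> = 27 * (7/10) * (7/10)"
    by (simp only: self_product_cube[OF \<open>n = 10\<close> \<open>i < 10\<close>]
        self_product_cube[OF \<open>n = 10\<close> \<open>j < 10\<close>])
  finally show ?thesis
    by (simp add: g_def mult.commute)
qed simp

lemma n_neq_10: "n \<noteq> 10"
proof
  assume "n = 10"
  define S where "S = {j \<in> {..<9}. (b (Suc j) \<odot> b 0)^6 \<noteq> 0}"
  have "(b (Suc j) \<odot> b 0)^6 = (if j \<in> S then 27/700 else 0)" if "j < 9" for j
    using cross_product_sixth_power[OF \<open>n = 10\<close>, of "Suc j" 0] that by (auto simp: S_def)
  then have "(\<Sum>j<9. (b (Suc j) \<odot> b 0)^6) = (\<Sum>j<9. if j \<in> S then 27/700 else 0)"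
    by simp
  also have "\<dots> = (\<Sum>j\<in>{..<9} \<inter> S. 27/700)"
    by (simp only: sum.inter_restrict finite_lessThan)
  also have "{..<9} \<inter> S = S"
    by (auto simp: S_def)
  finally have cross: "(\<Sum>j<9. (b (Suc j) \<odot> b 0)^6) = 27/700 * of_nat (card S)"
    by simp
  have split: "(b 0 \<odot> b 0)^3 = (b 0 \<odot> b 0)^6 + (\<Sum>j<9. (b (Suc j) \<odot> b 0)^6)"
    using decomposition[of "b 0"] sum.lessThan_Suc_shift[of "\<lambda>j. (b j \<odot> b 0)^6" 9] \<open>n = 10\<close>
    by simp
  have sixth: "(b 0 \<odot> b 0)^6 = ((b 0 \<odot> b 0)^3)^2"
    by (simp flip: power_mult)
  have "7/10 = (7/10)^2 + 27/700 * (of_nat (card S) :: complex)"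
    using split unfolding sixth cross self_product_cube[OF \<open>n = 10\<close> zero_less_numeral] .
  then have "(of_nat (27 * card S) :: complex) = of_nat 147"
    by (simp add: field_simps)
  then have "27 * card S = 147"
    by (simp only: of_nat_eq_iff)
  then show False
    by presburger
qed

end

lemma not_waring_decomposable_cube_sum_squares_10: "\<not> waring_decomposable 6 (\<lambda>x. (x \<odot> x) ^ 3) 10"
  unfolding waring_decomposable_def
  using sixth_power_decomposition.n_neq_10 sixth_power_decomposition.intro by metis

lemma waring_rank_cube_sum_squares: "waring_rank 6 (\<lambda>x. (x \<odot> x) ^ 3) = 11"
  unfolding waring_rank_eq_Least
proof (rule Least_equality)
  show "waring_decomposable 6 (\<lambda>x. (x \<odot> x) ^ 3) 11"
    by (rule waring_decomposable_cube_sum_squares_11)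
next
  fix r
  assume r: "waring_decomposable 6 (\<lambda>x. (x \<odot> x) ^ 3) r"
  show "11 \<le> r"
  proof (rule ccontr)
    assume "\<not> 11 \<le> r"
    then have "waring_decomposable 6 (\<lambda>x. (x \<odot> x) ^ 3) 10"
      using waring_decomposable_mono[OF r] by simp
    then show False
      using not_waring_decomposable_cube_sum_squares_10 by contradiction
  qed
qed

theorem corollary4p19:
  fixes A :: "complex^3^3"
  assumes "transpose A = A"
    and "det A \<noteq> 0"
  shows "waring_rank 6 (\<lambda>x. (quadratic_form A x) ^ 3) = 11"
  using waring_rank_cube_quadratic_form[OF assms] waring_rank_cube_sum_squares by simp

end
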